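(* Let $a,b\in\mathbb{R}$ with $b\neq0$, $T>0$, $h\in(0,1)$, and let $m_\Lambda[n]=\exp\!\big(\jmath\,\frac{a}{2b}(nTh)^2\big)$ for $n\in\mathbb{Z}$. Let $u=(u[n])_{n\in\mathbb{Z}}$ be the state sequence of the first-order $\Lambda\Sigma\Delta$ scheme $$u[n]=g[n]-q_{\Lambda}[n]+e^{-\jmath\frac{a(2n-1)(Th)^2}{2b}}u[n-1],\qquad q_{\Lambda}[n]=\operatorname{csgn}\!\Big(e^{-\jmath\frac{a(2n-1)(Th)^2}{2b}}u[n-1]+g[n]\Big),$$ driven by samples $g[n]=g(nTh)$ of a signal $g$ bandlimited to $[-\Omega,\Omega]$ in the LCT domain with $|g|\le1$, where the states satisfy $|\operatorname{Re}(u[n])|<1$ and $|\operatorname{Im}(u[n])|<1$ for all $n\in\mathbb{Z}$. Let $\varphi:\mathbb{R}\to\mathbb{C}$ be continuously differentiable with $\varphi'\in L^1(\mathbb{R})$ and $\sum_{n\in\mathbb{Z}}|\varphi(x-nh)|<\infty$ for every $x\in\mathbb{R}$. Define $\tilde u[n]=m_\Lambda[n]u[n]$, $v[n]=\delta[n]-\delta[n-1]$, and $$e(t)=h\,e^{-\jmath\frac{a t^2}{2b}}\sum_{n\in\mathbb{Z}}(\tilde u* v)[n]\,\varphi\!\Big(\frac{t}{T}-nh\Big),\qquad t\in\mathbb{R}.$$ Then for all $t\in\mathbb{R}$, $$|e(t)|\le h\sqrt{2}\,\|\varphi'\|_{L^1}.$$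
   Context: $\jmath$ is the imaginary unit; $*$ denotes discrete convolution, so $(\tilde u*v)[n]=\tilde u[n]-\tilde u[n-1]$; $\delta$ is the Kronecker delta. $\operatorname{csgn}(z)=\operatorname{sgn}(\operatorname{Re}z)+\jmath\operatorname{sgn}(\operatorname{Im}z)$ with $\operatorname{sgn}$ taking values $\pm1$. $e(t)$ is the approximation error $g(t)-\tilde g(t)$ of the reconstruction $\tilde g(t)=h\,e^{-\jmath\frac{at^2}{2b}}\sum_n m_\Lambda[n]q_\Lambda[n]\varphi(\frac tT-nh)$ with low-pass kernel $\varphi$ of bandwidth $\Omega$, and $T=\pi b/\Omega$. The Linear Canonical Transform has parameter matrix $\Lambda=\begin{bmatrix}a&b\\c&d\end{bmatrix}$, $ad-bc=1$. *)

theory Defs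
  imports "HOL-Analysis.Analysis"
begin

definition sgnpm :: "real \<Rightarrow> real" where
  "sgnpm x = (if x \<ge> 0 then 1 else -1)"

definition csgn :: "complex \<Rightarrow> complex" where
  "csgn z = complex_of_real (sgnpm (Re z)) + \<i> * complex_of_real (sgnpm (Im z))"

definition chirp_mod :: "real \<Rightarrow> real \<Rightarrow> real \<Rightarrow> real \<Rightarrow> int \<Rightarrow> complex" where
  "chirp_mod a b T h n = exp (\<i> * complex_of_real (a / (2*b) * (real_of_int n * T * h)^2))"

definition lsd_phase :: "real \<Rightarrow> real \<Rightarrow> real \<Rightarrow> real \<Rightarrow> int \<Rightarrow> complex" where
  "lsd_phase a b T h n = exp (- \<i> * complex_of_real (a * (2 * real_of_int n - 1) * (T*h)^2 / (2*b)))"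

text \<open>Linear canonical transform kernel (up to the constant normalisation) for
  parameters (a,b,c,d), b \<noteq> 0.\<close>
definition lct_kernel :: "real \<Rightarrow> real \<Rightarrow> real \<Rightarrow> real \<Rightarrow> real \<Rightarrow> complex" where
  "lct_kernel a b d t \<omega> =
     exp (\<i> * complex_of_real (a * t^2 / (2*b) - \<omega> * t / b + d * \<omega>^2 / (2*b)))"

definition lct_bandlimited :: "real \<Rightarrow> real \<Rightarrow> real \<Rightarrow> real \<Rightarrow> real \<Rightarrow> (real \<Rightarrow> complex) \<Rightarrow> bool" where
  "lct_bandlimited a b c d \<Omega> g \<longleftrightarrow>
     (\<exists>G :: real \<Rightarrow> complex. set_integrable lborel {-\<Omega>..\<Omega>} G \<and>
        (\<forall>t. g t = (LINT \<omega>:{-\<Omega>..\<Omega>}|lborel. G \<omega> * cnj (lct_kernel a b d t \<omega>))))"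

definition lsd_scheme :: "real \<Rightarrow> real \<Rightarrow> real \<Rightarrow> real \<Rightarrow> (real \<Rightarrow> complex)
    \<Rightarrow> (int \<Rightarrow> complex) \<Rightarrow> (int \<Rightarrow> complex) \<Rightarrow> bool" where
  "lsd_scheme a b T h g u q \<longleftrightarrow>
     (\<forall>n::int.
        q n = csgn (lsd_phase a b T h n * u (n-1) + g (real_of_int n * T * h)) \<and>
        u n = g (real_of_int n * T * h) - q n + lsd_phase a b T h n * u (n-1))"

text \<open>Error e(t) = h e^{-i a t^2/(2b)} sum_n (u~ * v)[n] phi(t/T - n h),
  with u~ = m_Lambda u and (u~ * v)[n] = u~[n] - u~[n-1].\<close>
definition lsd_error :: "real \<Rightarrow> real \<Rightarrow> real \<Rightarrow> real \<Rightarrow> (int \<Rightarrow> complex)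
    \<Rightarrow> (real \<Rightarrow> complex) \<Rightarrow> real \<Rightarrow> complex" where
  "lsd_error a b T h u \<phi> t =
     complex_of_real h * exp (- \<i> * complex_of_real (a * t^2 / (2*b))) *
     (\<Sum>\<^sub>\<infinity>n::int. (chirp_mod a b T h n * u n - chirp_mod a b T h (n-1) * u (n-1))
                     * \<phi> (t / T - real_of_int n * h))"

end

theory Submission
  imports Defs
begin

(* Summation by parts moves the difference operator from the modulated states w = m_Lambda u onto
   the kernel samples: sum_n (w[n] - w[n-1]) phi(x - nh) = sum_n w[n] (phi(x - nh) - phi(x - (n+1)h)).
   The chirp is unimodular and |Re u|, |Im u| < 1, so |w[n]| <= sqrt 2. By the fundamental theorem
   of calculus each kernel difference is at most the integral of |phi'| over an interval of length h,
   and these intervals are disjoint, so the differences sum to at most the L1 norm of phi'. *)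

lemma norm_le_sqrt2_if_abs_Re_Im_le_1:
  fixes z :: complex
  assumes "\<bar>Re z\<bar> \<le> 1" and "\<bar>Im z\<bar> \<le> 1"
  shows "norm z \<le> sqrt 2"
proof -
  have "(Re z)\<^sup>2 \<le> 1" "(Im z)\<^sup>2 \<le> 1"
    using assms by (simp_all add: abs_square_le_1)
  then show ?thesis
    unfolding cmod_def by (intro real_sqrt_le_mono) simp
qed

lemma infsum_summation_by_parts_int:
  fixes w f :: "int \<Rightarrow> 'a::{ring, topological_ab_group_add, t2_space}"
  assumes wf: "(\<lambda>n. w n * f n) summable_on UNIV"
    and wf_shift: "(\<lambda>n. w n * f (n + 1)) summable_on UNIV"
  shows "(\<Sum>\<^sub>\<infinity>n. (w n - w (n - 1)) * f n) = (\<Sum>\<^sub>\<infinity>n. w n * (f n - f (n + 1)))"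
proof -
  let ?S = "\<Sum>\<^sub>\<infinity>n. w n * f n" and ?S' = "\<Sum>\<^sub>\<infinity>n. w n * f (n + 1)"
  have shift: "bij_betw (\<lambda>n::int. n - 1) UNIV UNIV"
    by (rule bij_betwI[where g = "\<lambda>n. n + 1"]) auto
  have diff: "((\<lambda>n. g n - k n) has_sum a - b) UNIV"
    if "(g has_sum a) UNIV" and "(k has_sum b) UNIV" for g k :: "int \<Rightarrow> 'a" and a b
    using has_sum_add[OF that(1), of "\<lambda>n. - k n" "- b"] has_sum_uminus[of k UNIV "- b"] that(2)
    by simp
  have "((\<lambda>n. w (n - 1) * f (n - 1 + 1)) has_sum ?S') UNIV"
    using has_sum_reindex_bij_betw[OF shift, of "\<lambda>n. w n * f (n + 1)"] wf_shift by simp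
  then have "((\<lambda>n. w n * f n - w (n - 1) * f n) has_sum ?S - ?S') UNIV"
    by (intro diff has_sum_infsum[OF wf]) simp
  moreover have "((\<lambda>n. w n * f n - w n * f (n + 1)) has_sum ?S - ?S') UNIV"
    by (intro diff has_sum_infsum wf wf_shift)
  ultimately show ?thesis
    by (simp add: infsumI algebra_simps)
qed

lemma norm_infsum_summation_by_parts_le:
  fixes w f :: "int \<Rightarrow> 'a::{banach, real_normed_algebra}"
  assumes w_bound: "\<And>n. norm (w n) \<le> B"
    and f_summable: "(\<lambda>n. norm (f n)) summable_on UNIV"
  shows "norm (\<Sum>\<^sub>\<infinity>n. (w n - w (n - 1)) * f n) \<le> B * (\<Sum>\<^sub>\<infinity>n. norm (f n - f (n + 1)))"
proof -
  have norm_mult_le: "norm (w n * x) \<le> B * norm x" for n x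
    by (meson norm_ge_zero mult_right_mono norm_mult_ineq order_trans w_bound)
  have shift: "bij_betw (\<lambda>n::int. n + 1) UNIV UNIV"
    by (rule bij_betwI[where g = "\<lambda>n. n - 1"]) auto
  have f_shift_summable: "(\<lambda>n. norm (f (n + 1))) summable_on UNIV"
    using summable_on_reindex_bij_betw[OF shift, of "\<lambda>n. norm (f n)"] f_summable by simp
  have diff_summable: "(\<lambda>n. norm (f n - f (n + 1))) summable_on UNIV"
    by (rule Infinite_Sum.abs_summable_on_comparison_test'[OF summable_on_add[OF f_summable f_shift_summable]])
      (simp add: norm_triangle_ineq4)
  have weighted_norm: "(\<lambda>n. norm (w n * g n)) summable_on UNIV"
    if "(\<lambda>n. norm (g n)) summable_on UNIV" for g :: "int \<Rightarrow> 'a"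
    by (rule Infinite_Sum.abs_summable_on_comparison_test'[OF summable_on_cmult_right[OF that]])
      (rule norm_mult_le)
  have "norm (\<Sum>\<^sub>\<infinity>n. (w n - w (n - 1)) * f n) = norm (\<Sum>\<^sub>\<infinity>n. w n * (f n - f (n + 1)))"
    by (simp add: infsum_summation_by_parts_int abs_summable_summable weighted_norm
        f_summable f_shift_summable)
  also have "\<dots> \<le> (\<Sum>\<^sub>\<infinity>n. norm (w n * (f n - f (n + 1))))"
    by (intro norm_infsum_bound weighted_norm diff_summable)
  also have "\<dots> \<le> (\<Sum>\<^sub>\<infinity>n. B * norm (f n - f (n + 1)))"
    by (intro infsum_mono weighted_norm diff_summable summable_on_cmult_right norm_mult_le)
  also have "\<dots> = B * (\<Sum>\<^sub>\<infinity>n. norm (f n - f (n + 1)))"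
    by (rule infsum_cmult_right[OF diff_summable])
  finally show ?thesis .
qed

lemma norm_diff_le_set_integral_norm_deriv:
  fixes p p' :: "real \<Rightarrow> 'a::euclidean_space"
  assumes "c \<le> d"
    and "\<And>x. x \<in> {c..d} \<Longrightarrow> (p has_vector_derivative p' x) (at x within {c..d})"
    and "continuous_on {c..d} p'"
  shows "norm (p d - p c) \<le> (LINT y:{c<..<d}|lborel. norm (p' y))"
proof -
  have "p d - p c = (LBINT y=ereal c..ereal d. p' y)"
    using assms by (intro interval_integral_FTC_finite[symmetric]) auto
  also have "\<dots> = (LINT y:{c<..<d}|lborel. p' y)"
    using assms(1) by (simp add: interval_integral_Ioo)
  finally have "p d - p c = (LINT y:{c<..<d}|lborel. p' y)" .
  moreover have "set_integrable lborel {c<..<d} p'"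
    by (rule set_integrable_subset[OF borel_integrable_atLeastAtMost'[OF assms(3)]]) auto
  ultimately show ?thesis
    by (simp add: set_integral_norm_bound)
qed

lemma disjoint_family_grid_intervals:
  fixes x h :: real
  shows "disjoint_family (\<lambda>n::int. {x - (real_of_int n + 1) * h <..< x - real_of_int n * h})"
  unfolding disjoint_family_on_def
proof (intro ballI impI, rule ccontr)
  fix m n :: int
  assume "m \<noteq> n" and "{x - (real_of_int m + 1) * h <..< x - real_of_int m * h} \<inter>
      {x - (real_of_int n + 1) * h <..< x - real_of_int n * h} \<noteq> {}"
  then obtain y where "y \<in> {x - (real_of_int m + 1) * h <..< x - real_of_int m * h}"
      "y \<in> {x - (real_of_int n + 1) * h <..< x - real_of_int n * h}"
    by blast
  then have neg: "(real_of_int m - real_of_int n - 1) * h < 0" "(real_of_int n - real_of_int m - 1) * h < 0"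
    by (auto simp: algebra_simps)
  then have "0 < h"
    unfolding left_diff_distrib by linarith
  moreover have "0 \<le> real_of_int m - real_of_int n - 1 \<or> 0 \<le> real_of_int n - real_of_int m - 1"
    using \<open>m \<noteq> n\<close> by linarith
  ultimately show False
    using neg by (meson less_imp_le mult_nonneg_nonneg not_le)
qed

lemma sum_set_integral_disjoint_le_integral:
  fixes f :: "'b \<Rightarrow> real"
  assumes "finite I" and "disjoint_family_on A I" and "\<And>i. i \<in> I \<Longrightarrow> A i \<in> sets M"
    and "integrable M f" and "\<And>x. 0 \<le> f x"
  shows "(\<Sum>i\<in>I. LINT x:A i|M. f x) \<le> integral\<^sup>L M f"
proof -
  have integrable_on: "set_integrable M S f" if "S \<in> sets M" for S
    unfolding set_integrable_def using that assms(4) by (rule integrable_mult_indicator)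
  have "AE x in M. x \<in> A i \<and> x \<in> A j \<longrightarrow> i = j" if "i \<in> I" "j \<in> I" for i j
    using assms(2) that by (intro AE_I2) (auto simp: disjoint_family_on_def)
  then have "(\<Sum>i\<in>I. LINT x:A i|M. f x) = (LINT x:(\<Union>i\<in>I. A i)|M. f x)"
    by (intro set_integral_finite_UN_AE[symmetric] assms(1,3) integrable_on)
  also have "\<dots> \<le> integral\<^sup>L M f"
    unfolding set_lebesgue_integral_def
    using assms(1,3) by (intro integral_mono integrable_on[unfolded set_integrable_def] assms(4))
      (auto simp: assms(5) indicator_def)
  finally show ?thesis .
qed

lemma infsum_norm_diff_samples_le_integral_norm_deriv:
  fixes \<phi> \<phi>' :: "real \<Rightarrow> 'a::euclidean_space" and x h :: real
  assumes "0 \<le> h"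
    and deriv: "\<And>y. (\<phi> has_vector_derivative \<phi>' y) (at y)"
    and "continuous_on UNIV \<phi>'" and "integrable lborel \<phi>'"
  shows "(\<Sum>\<^sub>\<infinity>n::int. norm (\<phi> (x - real_of_int n * h) - \<phi> (x - real_of_int (n + 1) * h)))
    \<le> (\<integral>y. norm (\<phi>' y) \<partial>lborel)"
proof -
  let ?I = "\<lambda>n::int. {x - (real_of_int n + 1) * h <..< x - real_of_int n * h}"
  let ?d = "\<lambda>n::int. norm (\<phi> (x - real_of_int n * h) - \<phi> (x - real_of_int (n + 1) * h))"
  have finite_bound: "sum ?d F \<le> (\<integral>y. norm (\<phi>' y) \<partial>lborel)" if "finite F" for F
  proof -
    have "sum ?d F \<le> (\<Sum>n\<in>F. LINT y:?I n|lborel. norm (\<phi>' y))"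
    proof (rule sum_mono)
      fix n
      have "norm (\<phi> (x - real_of_int n * h) - \<phi> (x - (real_of_int n + 1) * h))
          \<le> (LINT y:?I n|lborel. norm (\<phi>' y))"
        using assms(1) deriv[THEN has_vector_derivative_at_within]
        by (intro norm_diff_le_set_integral_norm_deriv continuous_on_subset[OF assms(3)])
            (auto simp: algebra_simps)
      then show "?d n \<le> (LINT y:?I n|lborel. norm (\<phi>' y))"
        by simp
    qed
    also have "\<dots> \<le> (\<integral>y. norm (\<phi>' y) \<partial>lborel)"
      by (rule sum_set_integral_disjoint_le_integral[OF that
            disjoint_family_on_mono[OF subset_UNIV disjoint_family_grid_intervals]])
        (simp_all add: integrable_norm[OF assms(4)])
    finally show ?thesis .
  qed
  have "?d summable_on UNIV"
    by (rule nonneg_bdd_above_summable_on) (simp, rule bdd_aboveI2, rule finite_bound, simp)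
  then show ?thesis
    by (rule infsum_le_finite_sums) (rule finite_bound)
qed

theorem mainTheorem2:
  fixes a b c d T h \<Omega> :: real
    and g :: "real \<Rightarrow> complex"
    and u q :: "int \<Rightarrow> complex"
    and \<phi> \<phi>' :: "real \<Rightarrow> complex"
  assumes "b \<noteq> 0" and "a * d - b * c = 1"
    and "T > 0" and "0 < h" and "h < 1" and "\<Omega> > 0"
    and "lct_bandlimited a b c d \<Omega> g"
    and "\<forall>t. norm (g t) \<le> 1"
    and "lsd_scheme a b T h g u q"
    and "\<forall>n. \<bar>Re (u n)\<bar> < 1 \<and> \<bar>Im (u n)\<bar> < 1"
    and "\<forall>x. (\<phi> has_vector_derivative \<phi>' x) (at x)"
    and "continuous_on UNIV \<phi>'"
    and "integrable lborel \<phi>'"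
    and "\<forall>x. (\<lambda>n::int. norm (\<phi> (x - real_of_int n * h))) summable_on UNIV"
  shows "\<forall>t. norm (lsd_error a b T h u \<phi> t) \<le> h * sqrt 2 * (\<integral>x. norm (\<phi>' x) \<partial>lborel)"
proof
  fix t :: real
  define f where "f n = \<phi> (t / T - real_of_int n * h)" for n :: int
  define w where "w n = chirp_mod a b T h n * u n" for n :: int
  have w_bound: "norm (w n) \<le> sqrt 2" for n
    using norm_le_sqrt2_if_abs_Re_Im_le_1[of "u n"] assms(10)
    by (simp add: w_def chirp_mod_def norm_mult less_imp_le)
  have chirp_unimodular: "norm (exp (- \<i> * complex_of_real (a * t\<^sup>2 / (2 * b)))) = 1"
    using norm_exp_i_times[of "- (a * t\<^sup>2 / (2 * b))"] by simp
  have "norm (lsd_error a b T h u \<phi> t) = h * norm (\<Sum>\<^sub>\<infinity>n. (w n - w (n - 1)) * f n)"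
    using assms(4) chirp_unimodular by (simp add: lsd_error_def w_def f_def norm_mult)
  also have "\<dots> \<le> h * (sqrt 2 * (\<Sum>\<^sub>\<infinity>n. norm (f n - f (n + 1))))"
    using norm_infsum_summation_by_parts_le[OF w_bound, of f] assms(4,14)
    by (intro mult_left_mono) (simp_all add: f_def)
  also have "\<dots> \<le> h * (sqrt 2 * (\<integral>x. norm (\<phi>' x) \<partial>lborel))"
    using infsum_norm_diff_samples_le_integral_norm_deriv[of h \<phi> \<phi>' "t / T"] assms(4,11-13)
    by (intro mult_left_mono) (simp_all add: f_def)
  finally show "norm (lsd_error a b T h u \<phi> t) \<le> h * sqrt 2 * (\<integral>x. norm (\<phi>' x) \<partial>lborel)"
    by (simp add: mult.assoc)
qed

end
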